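(* Let $y$ be a non-empty word of length $n$ over a totally ordered alphabet. Algorithm LyndonSuffixTable (described in the context) terminates and returns the Lyndon suffix table of $y$, i.e. for every $j\in\{0,\dots,n-1\}$ its output satisfies $\mathrm{lyns}[j]=$ the length of the longest suffix of $y[0\,..\,j]$ that is a Lyndon word. It runs in time $O(n)$ and accesses letters of $y$ only through letter comparisons.
   Context: Lexicographic order $<$: $u<v$ if $u$ is a proper prefix of $v$, or $u=ras$, $v=rbt$ with letters $a<b$. A Lyndon word is a non-empty word strictly smaller than each of its proper non-empty suffixes. $y[i\,..\,j]$ denotes $y[i]\cdots y[j]$. Algorithm LyndonSuffixTable (input: non-empty word $y$ of length $n$): lyns[0] ← 1; per ← 1; h ← 0; i ← 0; j ← 1. While j < n: if y[j] < y[i] then { h ← j − (i − h); lyns[h] ← 1; per ← 1; i ← h; j ← h+1 } else if y[j] > y[i] then { lyns[j] ← j − h + 1; j ← j+1; per ← j − h; i ← h } else { lyns[j] ← lyns[i]; i ← h + ((i − h + 1) mod per); j ← j+1 }. Return lyns. *)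

theory Defs
  imports Main
begin

definition lex_less :: "'a::linorder list \<Rightarrow> 'a list \<Rightarrow> bool" where
  "lex_less u v \<longleftrightarrow>
     (\<exists>w. w \<noteq> [] \<and> v = u @ w) \<or>
     (\<exists>r a b s t. u = r @ a # s \<and> v = r @ b # t \<and> a < b)"

definition lyndon :: "'a::linorder list \<Rightarrow> bool" where
  "lyndon w \<longleftrightarrow> w \<noteq> [] \<and> (\<forall>k. 0 < k \<and> k < length w \<longrightarrow> lex_less w (drop k w))"

definition longest_lyndon_suffix_len :: "'a::linorder list \<Rightarrow> nat" where
  "longest_lyndon_suffix_len x =
     (GREATEST l. l \<le> length x \<and> lyndon (drop (length x - l) x))"

text \<open>The algorithm is parameterised by a
  comparison oracle on positions, lt a b meaning y[a] < y[b]; this makes explicit that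
  the letters of y are accessed only through letter comparisons.\<close>
type_synonym lst_state = "(nat \<Rightarrow> nat) \<times> nat \<times> nat \<times> nat \<times> nat"

definition lst_init :: lst_state where
  "lst_init = ((\<lambda>_. 0)(0 := 1), 1, 0, 0, 1)"

definition lst_j :: "lst_state \<Rightarrow> nat" where
  "lst_j s = (case s of (lyns, per, h, i, j) \<Rightarrow> j)"

definition lst_lyns :: "lst_state \<Rightarrow> nat \<Rightarrow> nat" where
  "lst_lyns s = (case s of (lyns, per, h, i, j) \<Rightarrow> lyns)"

definition lst_step :: "(nat \<Rightarrow> nat \<Rightarrow> bool) \<Rightarrow> lst_state \<Rightarrow> lst_state" where
  "lst_step lt s = (case s of (lyns, per, h, i, j) \<Rightarrow>
     if lt j i then
       (let h' = j - (i - h) in (lyns(h' := 1), 1, h', h', h' + 1))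
     else if lt i j then
       (lyns(j := j - h + 1), (j + 1) - h, h, h, j + 1)
     else
       (lyns(j := lyns i), per, h, h + ((i - h + 1) mod per), j + 1))"

definition word_lt :: "'a::linorder list \<Rightarrow> nat \<Rightarrow> nat \<Rightarrow> bool" where
  "word_lt y a b \<longleftrightarrow> y ! a < y ! b"

definition lst_iter :: "'a::linorder list \<Rightarrow> nat \<Rightarrow> lst_state" where
  "lst_iter y k = ((lst_step (word_lt y)) ^^ k) lst_init"

definition lst_steps :: "'a::linorder list \<Rightarrow> nat" where
  "lst_steps y = (LEAST k. \<not> lst_j (lst_iter y k) < length y)"

definition lyndon_suffix_table :: "'a::linorder list \<Rightarrow> nat \<Rightarrow> nat" where
  "lyndon_suffix_table y = lst_lyns (lst_iter y (lst_steps y))"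

end

theory Submission
  imports Defs
begin

text \<open>
  The loop maintains Duval's invariant: \<open>y[h..j)\<close> is a prefix of a power of the Lyndon word
  \<open>w = y[h..h+p)\<close> containing \<open>w\<close> at least once, \<open>i = h + (j - h) mod p\<close> is the position
  in \<open>w\<close> aligned with \<open>j\<close>, no Lyndon factor of \<open>y\<close> starts before \<open>h\<close> and ends at or
  after \<open>h\<close>, and the table is correct below \<open>j\<close>.
  If \<open>y[j] > y[i]\<close> then \<open>y[h..j]\<close> is a Lyndon word (Duval's lemma), and it is the longest
  Lyndon suffix ending at \<open>j\<close> because nothing crosses \<open>h\<close>. If \<open>y[j] = y[i]\<close> the
  periodicity extends, and the longest Lyndon suffix ending at \<open>j\<close> is the translate of the one
  ending at \<open>i\<close>. If \<open>y[j] < y[i]\<close>, no Lyndon factor starting before the last incomplete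
  copy of \<open>w\<close> can reach \<open>j\<close> or beyond, so the scan restarts there.
  Every iteration increases \<open>h + j \<le> 2n\<close>, and every branch is decided by comparing two letters
  at positions below \<open>n\<close>.
\<close>

lemma lex_less_iff_nth:
  "lex_less u v \<longleftrightarrow>
     (length u < length v \<and> (\<forall>t<length u. u!t = v!t)) \<or>
     (\<exists>l. l < length u \<and> l < length v \<and> (\<forall>t<l. u!t = v!t) \<and> u!l < v!l)"
proof
  assume "lex_less u v"
  then consider (prefix) w where "v = u @ w" "w \<noteq> []"
    | (mismatch) r a b s t where "u = r @ a # s" "v = r @ b # t" "a < b"
    unfolding lex_less_def by blast
  then show "(length u < length v \<and> (\<forall>t<length u. u!t = v!t)) \<or>
     (\<exists>l. l < length u \<and> l < length v \<and> (\<forall>t<l. u!t = v!t) \<and> u!l < v!l)"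
  proof cases
    case prefix
    then show ?thesis by (auto simp: nth_append)
  next
    case mismatch
    then have "length r < length u \<and> length r < length v \<and> (\<forall>t<length r. u!t = v!t) \<and>
        u!length r < v!length r"
      by (auto simp: nth_append)
    then show ?thesis by blast
  qed
next
  assume "(length u < length v \<and> (\<forall>t<length u. u!t = v!t)) \<or>
     (\<exists>l. l < length u \<and> l < length v \<and> (\<forall>t<l. u!t = v!t) \<and> u!l < v!l)"
  then show "lex_less u v"
  proof
    assume h: "length u < length v \<and> (\<forall>t<length u. u!t = v!t)"
    then have "take (length u) v = u" by (intro nth_equalityI) auto
    then have "v = u @ drop (length u) v" by (metis append_take_drop_id)
    with h show ?thesis unfolding lex_less_def by (metis drop_eq_Nil2 not_le)
  next
    assume "\<exists>l. l < length u \<and> l < length v \<and> (\<forall>t<l. u!t = v!t) \<and> u!l < v!l"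
    then obtain l where l: "l < length u" "l < length v" "\<forall>t<l. u!t = v!t" "u!l < v!l"
      by blast
    have "take l v = take l u" using l by (intro nth_equalityI) auto
    then have "u = take l u @ u!l # drop (Suc l) u" "v = take l u @ v!l # drop (Suc l) v"
      using l id_take_nth_drop by metis+
    with l(4) show ?thesis unfolding lex_less_def by blast
  qed
qed

text \<open>For a proper suffix the prefix case of \<^const>\<open>lex_less\<close> cannot occur, so comparing
  \<open>y[a..b)\<close> with its suffix \<open>y[k..b)\<close> amounts to finding a first mismatch.\<close>
definition lex_less_suffix :: "'a::linorder list \<Rightarrow> nat \<Rightarrow> nat \<Rightarrow> nat \<Rightarrow> bool" where
  "lex_less_suffix y a k b \<longleftrightarrow>
     (\<exists>l<b - k. (\<forall>t<l. y!(a+t) = y!(k+t)) \<and> y!(a+l) < y!(k+l))"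

definition lyndon_factor :: "'a::linorder list \<Rightarrow> nat \<Rightarrow> nat \<Rightarrow> bool" where
  "lyndon_factor y a b \<longleftrightarrow> a < b \<and> (\<forall>k. a < k \<and> k < b \<longrightarrow> lex_less_suffix y a k b)"

lemma lex_less_drop_iff:
  assumes "k < length x"
  shows "lex_less x (drop k x) \<longleftrightarrow> lex_less_suffix x 0 k (length x)"
  using assms unfolding lex_less_iff_nth lex_less_suffix_def
  by (auto simp: less_diff_conv) (metis add_lessD1 less_diff_conv add.commute)

lemma lyndon_iff_lyndon_factor: "lyndon x \<longleftrightarrow> lyndon_factor x 0 (length x)"
  unfolding lyndon_def lyndon_factor_def using lex_less_drop_iff by fastforce

lemma lyndon_drop_take_iff:
  assumes "b \<le> length y"
  shows "lyndon (drop a (take b y)) \<longleftrightarrow> lyndon_factor y a b"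
proof -
  have nth: "drop a (take b y) ! t = y ! (a + t)" if "t < b - a" for t
    using that assms by simp
  have shift: "lex_less_suffix (drop a (take b y)) 0 k (b - a) \<longleftrightarrow> lex_less_suffix y a (a + k) b"
    if "k < b - a" for k
    unfolding lex_less_suffix_def using that by (auto simp: nth add.assoc)
  have "lyndon (drop a (take b y)) \<longleftrightarrow>
      a < b \<and> (\<forall>k. 0 < k \<and> k < b - a \<longrightarrow> lex_less_suffix y a (a + k) b)"
    unfolding lyndon_iff_lyndon_factor lyndon_factor_def using assms shift by auto
  also have "\<dots> \<longleftrightarrow> lyndon_factor y a b"
    unfolding lyndon_factor_def
  proof (intro conj_cong refl iffI allI impI)
    fix k assume "\<forall>k. 0 < k \<and> k < b - a \<longrightarrow> lex_less_suffix y a (a + k) b" "a < k \<and> k < b"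
    then show "lex_less_suffix y a k b" by (metis add_diff_inverse_nat diff_less_mono
        less_imp_le_nat not_less_iff_gr_or_eq zero_less_diff)
  next
    fix k assume "\<forall>k. a < k \<and> k < b \<longrightarrow> lex_less_suffix y a k b" "0 < k \<and> k < b - a"
    moreover have "a < a + k \<and> a + k < b" using \<open>0 < k \<and> k < b - a\<close> by arith
    ultimately show "lex_less_suffix y a (a + k) b" by blast
  qed
  finally show ?thesis .
qed

lemma lyndon_factor_single: "lyndon_factor y a (Suc a)"
  by (auto simp: lyndon_factor_def)

lemma lyndon_factor_cong:
  assumes "b \<le> length y" "d \<le> length y" "b - a = d - c" "\<forall>t < b - a. y!(a + t) = y!(c + t)"
  shows "lyndon_factor y a b \<longleftrightarrow> lyndon_factor y c d"
proof -
  have "drop a (take b y) = drop c (take d y)"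
    using assms by (intro nth_equalityI) auto
  then show ?thesis
    unfolding lyndon_drop_take_iff[OF assms(1), symmetric] lyndon_drop_take_iff[OF assms(2), symmetric]
    by simp
qed

definition lyndon_suffix_len :: "'a::linorder list \<Rightarrow> nat \<Rightarrow> nat" where
  "lyndon_suffix_len y k = (GREATEST l. l \<le> Suc k \<and> lyndon_factor y (Suc k - l) (Suc k))"

lemma lyndon_suffix_len_eqI:
  assumes "L \<le> Suc k" "lyndon_factor y (Suc k - L) (Suc k)"
    "\<And>l. l \<le> Suc k \<Longrightarrow> lyndon_factor y (Suc k - l) (Suc k) \<Longrightarrow> l \<le> L"
  shows "lyndon_suffix_len y k = L"
  unfolding lyndon_suffix_len_def by (rule Greatest_equality) (use assms in auto)

lemma longest_lyndon_suffix_len_take: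
  assumes "k < length y"
  shows "longest_lyndon_suffix_len (take (Suc k) y) = lyndon_suffix_len y k"
proof -
  have "length (take (Suc k) y) = Suc k" using assms by simp
  then show ?thesis
    unfolding longest_lyndon_suffix_len_def lyndon_suffix_len_def
    using lyndon_drop_take_iff[of "Suc k" y] assms by simp
qed

definition no_lyndon_across :: "'a::linorder list \<Rightarrow> nat \<Rightarrow> bool" where
  "no_lyndon_across y h \<longleftrightarrow>
     (\<forall>k m. k < h \<longrightarrow> h \<le> m \<longrightarrow> m < length y \<longrightarrow> \<not> lyndon_factor y k (Suc m))"

lemma lyndon_suffix_len_start:
  assumes "lyndon_factor y h (Suc j)" "no_lyndon_across y h" "j < length y"
  shows "lyndon_suffix_len y j = Suc j - h"
proof (rule lyndon_suffix_len_eqI)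
  have "h \<le> j" using assms(1) unfolding lyndon_factor_def by simp
  then show "lyndon_factor y (Suc j - (Suc j - h)) (Suc j)" using assms(1) by simp
  fix l assume l: "l \<le> Suc j" "lyndon_factor y (Suc j - l) (Suc j)"
  show "l \<le> Suc j - h"
  proof (rule ccontr)
    assume "\<not> l \<le> Suc j - h"
    then have "Suc j - l < h" using l(1) \<open>h \<le> j\<close> by simp
    then show False using l(2) assms(2,3) \<open>h \<le> j\<close> unfolding no_lyndon_across_def by simp
  qed
qed simp

definition has_period :: "'a list \<Rightarrow> nat \<Rightarrow> nat \<Rightarrow> nat \<Rightarrow> bool" where
  "has_period y h j p \<longleftrightarrow> (\<forall>a. h \<le> a \<longrightarrow> a < j \<longrightarrow> y!a = y!(h + (a - h) mod p))"

lemma has_period_nth: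
  assumes "has_period y h j p" "h \<le> k" "k + t < j"
  shows "y!(k + t) = y!(h + ((k - h) mod p + t) mod p)"
proof -
  have "k + t - h = (k - h) + t" using assms(2) by simp
  then show ?thesis using assms unfolding has_period_def by (simp add: mod_add_left_eq)
qed

lemma next_period_boundary:
  fixes h k p Q :: nat
  assumes "0 < p" "h \<le> k"
  shows "(k + (p - (k - h) mod p) - h) mod p = 0"
    and "k < h + p * Q \<Longrightarrow> k + (p - (k - h) mod p) \<le> h + p * Q"
proof -
  define q where "q = (k - h) div p"
  have r: "(k - h) mod p < p" using assms by simp
  have k: "k = h + p * q + (k - h) mod p"
    using mult_div_mod_eq[of p "k - h"] assms unfolding q_def by linarith
  then have "k + (p - (k - h) mod p) - h = p * (q + 1)" using r by simp
  then show "(k + (p - (k - h) mod p) - h) mod p = 0" by simp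
  assume "k < h + p * Q"
  then have "q < Q" using k by (metis add_lessD1 add_less_cancel_left mult_less_cancel1)
  then have "p * (q + 1) \<le> p * Q" by (intro mult_le_mono2) simp
  then show "k + (p - (k - h) mod p) \<le> h + p * Q" using k r by (simp add: algebra_simps)
qed

lemma mod_diff_eq_of_aligned:
  fixes h g j p :: nat
  assumes "h \<le> g" "g \<le> j" "(g - h) mod p = 0"
  shows "(j - g) mod p = (j - h) mod p"
proof -
  have "j - h = (j - g) + (g - h)" using assms by simp
  then have "(j - h) mod p = ((j - g) + (g - h) mod p) mod p" by (simp add: mod_add_right_eq)
  then show ?thesis using assms(3) by simp
qed

text \<open>\<open>y[h..j)\<close> is a prefix of a power of the Lyndon word \<open>w = y[h..h+p)\<close> and contains \<open>w\<close>;
  the letter of \<open>w\<close> aligned with position \<open>j\<close> is \<open>y[h + (j - h) mod p]\<close>, the algorithm's \<open>i\<close>.\<close>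
locale lyndon_power_prefix =
  fixes y :: "'a::linorder list" and h p j :: nat
  assumes period_pos: "0 < p"
    and lyndon_period: "lyndon_factor y h (h + p)"
    and periodic: "has_period y h j p"
    and full_period: "p \<le> j - h"
begin

lemma nth_aligned:
  assumes "h \<le> k" "(k - h) mod p = 0" "k + t < j"
  shows "y!(k + t) = y!(h + t mod p)"
  using has_period_nth[OF periodic assms(1,3)] assms(2) by simp

lemma nth_within_period:
  assumes "h \<le> k" "t < p - (k - h) mod p" "k + t < j"
  shows "y!(k + t) = y!(h + (k - h) mod p + t)"
  using has_period_nth[OF periodic assms(1,3)] assms(2) by (simp add: add.assoc)

lemma rotation_greater:
  assumes "0 < r" "r < p"
  shows "lex_less_suffix y h (h + r) (h + p)"
  using lyndon_period assms unfolding lyndon_factor_def by simp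

text \<open>The hypothesis \<open>cmp\<close> says that at \<open>j\<close> the word falls below the periodic continuation,
  or follows it but only after \<open>m\<close>; then \<open>y[g..m]\<close> never exceeds that continuation.\<close>
lemma periodic_continuation_bound:
  assumes cmp: "y!j < y!(h + (j - h) mod p) \<or> (y!j = y!(h + (j - h) mod p) \<and> m \<le> j)"
    and g: "h \<le> g" "(g - h) mod p = 0" "g \<le> j"
    and n: "g + n \<le> m" and prefix: "\<forall>t<n. y!(g + t) = y!(h + t mod p)"
  shows "y!(g + n) \<le> y!(h + n mod p)"
proof -
  have jg: "(j - g) mod p = (j - h) mod p" using mod_diff_eq_of_aligned[OF g(1,3,2)] .
  consider "g + n < j" | "g + n = j" | "j < g + n" by arith
  then show ?thesis
  proof cases
    case 1
    then show ?thesis using nth_aligned[OF g(1,2)] by simp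
  next
    case 2
    then show ?thesis using cmp jg by auto
  next
    case 3
    then have "y!(g + (j - g)) = y!(h + (j - g) mod p)" using prefix[rule_format, of "j - g"] g(3) by simp
    then have "y!j = y!(h + (j - h) mod p)" using g(3) jg by simp
    then have "m \<le> j" using cmp by auto
    with n 3 show ?thesis by simp
  qed
qed

text \<open>No Lyndon factor \<open>y[k..m]\<close> contains the first period boundary \<open>g > k\<close>: \<open>y[k..g)\<close> is a
  suffix of \<open>w\<close>, hence not below \<open>w\<close>, while \<open>y[g..m]\<close> does not exceed the periodic
  continuation, so the suffix \<open>y[g..m]\<close> is not greater than \<open>y[k..m]\<close>.\<close>
lemma suffix_not_greater_aligned:
  assumes cmp: "y!j < y!(h + (j - h) mod p) \<or> (y!j = y!(h + (j - h) mod p) \<and> m \<le> j)"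
    and k: "h \<le> k" "(k - h) mod p = 0" and kj: "k + p \<le> j"
  shows "\<not> lex_less_suffix y k (k + p) (Suc m)"
proof
  assume "lex_less_suffix y k (k + p) (Suc m)"
  then obtain l where l: "l < Suc m - (k + p)" "\<forall>t<l. y!(k + t) = y!(k + p + t)"
      "y!(k + l) < y!(k + p + l)"
    unfolding lex_less_suffix_def by blast
  have periodic_word: "y!(k + t) = y!(h + t mod p)" if "t \<le> l" for t
    using that
  proof (induction t rule: less_induct)
    case (less t)
    show ?case
    proof (cases "t < p")
      case True
      then show ?thesis using nth_aligned[OF k] kj by simp
    next
      case False
      have "k + t = k + p + (t - p)" "t - p < l" using False less.prems period_pos by simp_all
      then have "y!(k + t) = y!(k + (t - p))" using l(2) by metis
      also have "\<dots> = y!(h + (t - p) mod p)" using less.IH[of "t - p"] less.prems period_pos False by simp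
      also have "(t - p) mod p = t mod p" using False by (simp add: le_mod_geq)
      finally show ?thesis .
    qed
  qed
  have "(k + p - h) mod p = 0" using k by (metis Nat.diff_add_assoc2 mod_add_self2)
  then have "y!(k + p + l) \<le> y!(h + l mod p)"
    using periodic_continuation_bound[OF cmp, of "k + p" l] k kj l periodic_word by auto
  then show False using l(3) periodic_word by simp
qed

lemma suffix_not_greater_unaligned:
  assumes cmp: "y!j < y!(h + (j - h) mod p) \<or> (y!j = y!(h + (j - h) mod p) \<and> m \<le> j)"
    and k: "h \<le> k" "0 < (k - h) mod p"
    and g: "g = k + (p - (k - h) mod p)" "g \<le> j"
  shows "\<not> lex_less_suffix y k g (Suc m)"
proof
  define r where "r = (k - h) mod p"
  have r: "0 < r" "r < p" using k period_pos unfolding r_def by simp_all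
  assume "lex_less_suffix y k g (Suc m)"
  then obtain l where l: "l < Suc m - g" "\<forall>t<l. y!(k + t) = y!(g + t)" "y!(k + l) < y!(g + l)"
    unfolding lex_less_suffix_def by blast
  obtain l0 where l0: "l0 < p - r" "\<forall>t<l0. y!(h + t) = y!(h + r + t)" "y!(h + l0) < y!(h + r + l0)"
    using rotation_greater[OF r] unfolding lex_less_suffix_def by auto
  have block: "y!(k + t) = y!(h + r + t)" if "t < p - r" for t
    using nth_within_period[OF k(1)] that g unfolding r_def by simp
  define n where "n = min l l0"
  have "n < p" "g + n \<le> m" using l(1) l0(1) unfolding n_def by auto
  have "\<forall>t<n. y!(g + t) = y!(h + t mod p)"
    using l(2) l0 block r unfolding n_def by auto
  moreover have "(g - h) mod p = 0" using next_period_boundary(1)[OF period_pos k(1)] g by simp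
  moreover have "h \<le> g" using g k by simp
  ultimately have "y!(g + n) \<le> y!(h + n mod p)"
    using periodic_continuation_bound[OF cmp _ _ g(2) \<open>g + n \<le> m\<close>] by simp
  then have "y!(g + n) \<le> y!(h + n)" using \<open>n < p\<close> by simp
  also have "\<dots> \<le> y!(h + r + n)"
  proof (cases "n < l0")
    case True
    then show ?thesis using l0(2) by simp
  next
    case False
    then show ?thesis using l0(3) unfolding n_def by simp
  qed
  also have "\<dots> = y!(k + n)" using block[of n] l0(1) unfolding n_def by simp
  finally have "y!(g + n) \<le> y!(k + n)" .
  show False
  proof (cases "l \<le> l0")
    case True
    then show False using \<open>y!(g + n) \<le> y!(k + n)\<close> l(3) unfolding n_def by simp
  next
    case False
    then have "y!(g + l0) < y!(k + l0)"
      using \<open>y!(g + n) \<le> y!(h + n)\<close> l0(1,3) block[of l0] unfolding n_def by simp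
    then show False using l(2) False by simp
  qed
qed

lemma not_lyndon_factor_past_boundary:
  assumes cmp: "y!j < y!(h + (j - h) mod p) \<or> (y!j = y!(h + (j - h) mod p) \<and> m \<le> j)"
    and k: "h \<le> k" "k + (p - (k - h) mod p) \<le> j" "k + (p - (k - h) mod p) \<le> m"
  shows "\<not> lyndon_factor y k (Suc m)"
proof
  assume "lyndon_factor y k (Suc m)"
  moreover have "(k - h) mod p < p" using period_pos by simp
  ultimately have "lex_less_suffix y k (k + (p - (k - h) mod p)) (Suc m)"
    using k unfolding lyndon_factor_def by simp
  then show False
    using suffix_not_greater_aligned[OF cmp k(1)] suffix_not_greater_unaligned[OF cmp k(1) _ refl]
      k by (cases "(k - h) mod p = 0") auto
qed

lemma restart_position:
  "j - (j - h) mod p = h + p * ((j - h) div p)"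
  "h + p \<le> j - (j - h) mod p" "j < j - (j - h) mod p + p"
proof -
  have "p \<le> p * ((j - h) div p)"
    using full_period period_pos div_le_mono[OF full_period, of p] by simp
  moreover have "j - h = p * ((j - h) div p) + (j - h) mod p" by simp
  moreover have "(j - h) mod p < p" using period_pos by simp
  ultimately show "j - (j - h) mod p = h + p * ((j - h) div p)"
    "h + p \<le> j - (j - h) mod p" "j < j - (j - h) mod p + p" using full_period by linarith+
qed

lemma no_lyndon_factor_before_restart:
  assumes cmp: "y!j < y!(h + (j - h) mod p) \<or> (y!j = y!(h + (j - h) mod p) \<and> m \<le> j)"
    and across: "no_lyndon_across y h"
    and k: "k < j - (j - h) mod p" and m: "j - (j - h) mod p \<le> m" "m < length y"
  shows "\<not> lyndon_factor y k (Suc m)"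
proof (cases "k < h")
  case True
  then show ?thesis using across m restart_position(2) unfolding no_lyndon_across_def by simp
next
  case False
  then have "k + (p - (k - h) mod p) \<le> j - (j - h) mod p"
    using next_period_boundary(2)[OF period_pos] k restart_position(1) by simp
  then show ?thesis using not_lyndon_factor_past_boundary[OF cmp] False m by simp
qed

lemma extension_aligned:
  assumes gt: "y!(h + (j - h) mod p) < y!j" and k: "h < k" "k \<le> j" "(k - h) mod p = 0"
  shows "lex_less_suffix y h k (Suc j)"
proof -
  have h_periodic: "y!(h + t) = y!(h + t mod p)" if "h + t < j" for t
    using nth_aligned[of h t] that by simp
  moreover have "y!(k + t) = y!(h + t mod p)" if "k + t < j" for t
    using nth_aligned[of k t] that k by simp
  ultimately have "\<forall>t<j - k. y!(h + t) = y!(k + t)" using k by auto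
  moreover have "y!(h + (j - k)) = y!(h + (j - k) mod p)" using h_periodic[of "j - k"] k by simp
  moreover have "(j - k) mod p = (j - h) mod p" using mod_diff_eq_of_aligned k by simp
  ultimately show ?thesis
    unfolding lex_less_suffix_def using gt k by (intro exI[of _ "j - k"]) auto
qed

lemma extension_unaligned:
  assumes gt: "y!(h + (j - h) mod p) < y!j" and k: "h < k" "k \<le> j" "0 < (k - h) mod p"
  shows "lex_less_suffix y h k (Suc j)"
proof -
  define r where "r = (k - h) mod p"
  have r: "0 < r" "r < p" using k period_pos unfolding r_def by simp_all
  obtain l0 where l0: "l0 < p - r" "\<forall>t<l0. y!(h + t) = y!(h + r + t)" "y!(h + l0) < y!(h + r + l0)"
    using rotation_greater[OF r] unfolding lex_less_suffix_def by auto
  have block: "y!(k + t) = y!(h + r + t)" if "t < p - r" "k + t < j" for t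
    using nth_within_period[of k t] that k unfolding r_def by simp
  show ?thesis
  proof (cases "k + l0 < j")
    case True
    then show ?thesis
      unfolding lex_less_suffix_def using l0 block by (intro exI[of _ l0]) auto
  next
    case False
    define l where "l = j - k"
    have "l \<le> l0" using False unfolding l_def by simp
    have "j - h = (k - h) + l" using k unfolding l_def by simp
    then have "(j - h) mod p = ((k - h) mod p + l) mod p" by (metis mod_add_left_eq)
    also have "\<dots> = r + l" using \<open>l \<le> l0\<close> l0(1) unfolding r_def by simp
    finally have i: "h + (j - h) mod p = h + r + l" by simp
    have "y!(h + l) \<le> y!(h + r + l)"
    proof (cases "l < l0")
      case True
      then show ?thesis using l0(2) by simp
    next
      case False
      then show ?thesis using l0(3) \<open>l \<le> l0\<close> by simp
    qed
    then have "y!(h + l) < y!(k + l)" using gt i k unfolding l_def by simp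
    moreover have "\<forall>t<l. y!(h + t) = y!(k + t)" using l0 block \<open>l \<le> l0\<close> unfolding l_def by auto
    moreover have "l < Suc j - k" using k unfolding l_def by simp
    ultimately show ?thesis unfolding lex_less_suffix_def by blast
  qed
qed

lemma lyndon_factor_extension:
  assumes "y!(h + (j - h) mod p) < y!j"
  shows "lyndon_factor y h (Suc j)"
  unfolding lyndon_factor_def
proof (intro conjI allI impI)
  show "h < Suc j" using full_period period_pos by simp
  fix k assume "h < k \<and> k < Suc j"
  then show "lex_less_suffix y h k (Suc j)"
    using extension_aligned[OF assms] extension_unaligned[OF assms]
    by (cases "(k - h) mod p = 0") auto
qed

lemma nth_shift_by_periods:
  assumes "h \<le> c" "c < h + (j - h) mod p"
  shows "y!(c + p * ((j - h) div p)) = y!c"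
proof -
  have "c + p * ((j - h) div p) < j"
    using assms restart_position(1) mod_less_eq_dividend[of "j - h" p] by linarith
  then have "y!(c + p * ((j - h) div p)) = y!(h + (c - h) mod p)"
    using has_period_nth[OF periodic assms(1)] by simp
  also have "\<dots> = y!c"
    using has_period_nth[OF periodic assms(1), of 0] \<open>c + p * ((j - h) div p) < j\<close> by simp
  finally show ?thesis .
qed

lemma lyndon_suffix_translate:
  assumes eq: "y!j = y!(h + (j - h) mod p)" and jn: "j < length y"
    and l: "l \<le> Suc (h + (j - h) mod p) - h"
  shows "lyndon_factor y (Suc j - l) (Suc j) \<longleftrightarrow>
    lyndon_factor y (Suc (h + (j - h) mod p) - l) (Suc (h + (j - h) mod p))"
proof -
  define i where "i = h + (j - h) mod p"
  define d where "d = p * ((j - h) div p)"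
  have ij: "j = i + d" "h \<le> i"
    using restart_position(1) mod_less_eq_dividend[of "j - h" p] full_period
    unfolding i_def d_def by linarith+
  have "y!(Suc j - l + t) = y!(Suc i - l + t)" if "t < l" for t
  proof -
    have c: "h \<le> Suc i - l + t" "Suc i - l + t \<le> i" "Suc j - l + t = Suc i - l + t + d"
      using that l ij unfolding i_def by linarith+
    show ?thesis
    proof (cases "Suc i - l + t = i")
      case True
      then show ?thesis using c(3) eq ij unfolding i_def by simp
    next
      case False
      then have "y!(Suc i - l + t + d) = y!(Suc i - l + t)"
        using nth_shift_by_periods[of "Suc i - l + t"] c unfolding i_def d_def by simp
      then show ?thesis using c(3) by (simp add: ac_simps)
    qed
  qed
  then have "lyndon_factor y (Suc j - l) (Suc j) \<longleftrightarrow> lyndon_factor y (Suc i - l) (Suc i)"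
    using jn ij l unfolding i_def by (intro lyndon_factor_cong) auto
  then show ?thesis unfolding i_def .
qed

lemma lyndon_suffix_len_repeat:
  assumes eq: "y!j = y!(h + (j - h) mod p)" and across: "no_lyndon_across y h"
    and jn: "j < length y"
  shows "lyndon_suffix_len y j = lyndon_suffix_len y (h + (j - h) mod p)"
proof -
  define i where "i = h + (j - h) mod p"
  have ij: "i < j" "h \<le> i" "j - (j - h) mod p = h + (j - i)"
    using restart_position(2) period_pos mod_less_divisor[OF period_pos, of "j - h"]
    unfolding i_def by linarith+
  have long_j: "\<not> lyndon_factor y (Suc j - l) (Suc j)" if "Suc i - h < l" for l
  proof -
    have "Suc j - l < j - (j - h) mod p" using that ij by linarith
    then show ?thesis using no_lyndon_factor_before_restart[of j] eq across jn by simp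
  qed
  have long_i: "\<not> lyndon_factor y (Suc i - l) (Suc i)" if "Suc i - h < l" "l \<le> Suc i" for l
  proof -
    have "Suc i - l < h" "i < length y" using that ij jn by linarith+
    then show ?thesis using across ij unfolding no_lyndon_across_def by simp
  qed
  have "l \<le> Suc j \<and> lyndon_factor y (Suc j - l) (Suc j) \<longleftrightarrow>
      l \<le> Suc i \<and> lyndon_factor y (Suc i - l) (Suc i)" for l
    using lyndon_suffix_translate[OF eq jn, folded i_def] long_j long_i ij
    by (cases "l \<le> Suc i - h") auto
  then show ?thesis unfolding lyndon_suffix_len_def i_def by simp
qed

end

definition lst_invariant :: "'a::linorder list \<Rightarrow> lst_state \<Rightarrow> bool" where
  "lst_invariant y s = (case s of (lyns, p, h, i, j) \<Rightarrow>
     lyndon_power_prefix y h p j \<and> i = h + (j - h) mod p \<and> no_lyndon_across y h \<and>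
     j \<le> length y \<and> (\<forall>k<j. lyns k = lyndon_suffix_len y k))"

definition lst_potential :: "lst_state \<Rightarrow> nat" where
  "lst_potential s = (case s of (lyns, p, h, i, j) \<Rightarrow> h + j)"

lemma lst_invariant_restart:
  assumes inv: "lst_invariant y (lyns, p, h, i, j)" and jn: "j < length y" and lt: "y!j < y!i"
  defines "h' \<equiv> j - (i - h)"
  shows "lst_invariant y (lyns(h' := 1), 1, h', h', h' + 1)" "h + j < h' + (h' + 1)"
proof -
  interpret lyndon_power_prefix y h p j using inv by (simp add: lst_invariant_def)
  have i: "i = h + (j - h) mod p" and across: "no_lyndon_across y h"
    and table: "\<forall>k<j. lyns k = lyndon_suffix_len y k"
    using inv by (simp_all add: lst_invariant_def)
  have h': "h' = j - (j - h) mod p" unfolding h'_def i by simp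
  have "h' \<le> j" unfolding h' by simp
  have across': "no_lyndon_across y h'"
    unfolding no_lyndon_across_def h' using no_lyndon_factor_before_restart lt i across by auto
  have "has_period y h' (h' + 1) 1"
    unfolding has_period_def by (metis add.right_neutral le_antisym less_Suc_eq_le mod_by_1 Suc_eq_plus1)
  then have "lyndon_power_prefix y h' 1 (h' + 1)"
    by unfold_locales (auto simp: lyndon_factor_single)
  moreover have "lyndon_suffix_len y h' = 1"
    using lyndon_suffix_len_start[OF lyndon_factor_single across'] \<open>h' \<le> j\<close> jn by simp
  ultimately show "lst_invariant y (lyns(h' := 1), 1, h', h', h' + 1)"
    unfolding lst_invariant_def using across' table \<open>h' \<le> j\<close> jn by (auto simp: less_Suc_eq)
  show "h + j < h' + (h' + 1)" using restart_position(2,3) unfolding h' by linarith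
qed

lemma lst_invariant_extend:
  assumes inv: "lst_invariant y (lyns, p, h, i, j)" and jn: "j < length y" and gt: "y!i < y!j"
  shows "lst_invariant y (lyns(j := j - h + 1), j + 1 - h, h, h, j + 1)"
proof -
  interpret lyndon_power_prefix y h p j using inv by (simp add: lst_invariant_def)
  have i: "i = h + (j - h) mod p" and across: "no_lyndon_across y h"
    and table: "\<forall>k<j. lyns k = lyndon_suffix_len y k"
    using inv by (simp_all add: lst_invariant_def)
  have lyn: "lyndon_factor y h (Suc j)" using lyndon_factor_extension gt i by simp
  have "h < j" using full_period period_pos by simp
  then have "lyndon_power_prefix y h (j + 1 - h) (j + 1)"
    using lyn by unfold_locales (auto simp: has_period_def)
  moreover have "lyndon_suffix_len y j = j - h + 1"
    using lyndon_suffix_len_start[OF lyn across jn] \<open>h < j\<close> by simp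
  ultimately show ?thesis
    unfolding lst_invariant_def using across table jn by (auto simp: less_Suc_eq)
qed

lemma lst_invariant_repeat:
  assumes inv: "lst_invariant y (lyns, p, h, i, j)" and jn: "j < length y" and eq: "y!j = y!i"
  shows "lst_invariant y (lyns(j := lyns i), p, h, h + (i - h + 1) mod p, j + 1)"
proof -
  interpret lyndon_power_prefix y h p j using inv by (simp add: lst_invariant_def)
  have i: "i = h + (j - h) mod p" and across: "no_lyndon_across y h"
    and table: "\<forall>k<j. lyns k = lyndon_suffix_len y k"
    using inv by (simp_all add: lst_invariant_def)
  have "h < j" using full_period period_pos by simp
  have "i < j"
    using i restart_position(2) mod_less_divisor[OF period_pos, of "j - h"] by linarith
  have "has_period y h (j + 1) p"
    using periodic eq i unfolding has_period_def by (auto simp: less_Suc_eq)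
  then have "lyndon_power_prefix y h p (j + 1)"
    using period_pos lyndon_period full_period by unfold_locales auto
  moreover have "h + (i - h + 1) mod p = h + (j + 1 - h) mod p"
    using i \<open>h < j\<close> by (simp add: mod_Suc_eq Suc_diff_le)
  moreover have "lyns i = lyndon_suffix_len y j"
    using table \<open>i < j\<close> lyndon_suffix_len_repeat[OF _ across jn] eq i by simp
  ultimately show ?thesis
    unfolding lst_invariant_def using across table jn by (auto simp: less_Suc_eq)
qed

lemma lst_step_invariant:
  assumes inv: "lst_invariant y s" and jn: "lst_j s < length y"
  shows "lst_invariant y (lst_step (word_lt y) s)"
    and "lst_potential s < lst_potential (lst_step (word_lt y) s)"
proof -
  obtain lyns p h i j where s: "s = (lyns, p, h, i, j)" by (cases s) auto
  have inv': "lst_invariant y (lyns, p, h, i, j)" and jn': "j < length y"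
    using inv jn s by (simp_all add: lst_j_def)
  consider "y!j < y!i" | "y!i < y!j" | "y!j = y!i" by fastforce
  then have "lst_invariant y (lst_step (word_lt y) s) \<and>
      lst_potential s < lst_potential (lst_step (word_lt y) s)"
  proof cases
    case 1
    then show ?thesis using lst_invariant_restart[OF inv' jn' 1] s
      by (simp add: lst_step_def word_lt_def Let_def lst_potential_def)
  next
    case 2
    then have "\<not> y!j < y!i" by simp
    then show ?thesis using lst_invariant_extend[OF inv' jn' 2] 2 s
      by (simp add: lst_step_def word_lt_def lst_potential_def)
  next
    case 3
    then show ?thesis using lst_invariant_repeat[OF inv' jn' 3] s
      by (simp add: lst_step_def word_lt_def lst_potential_def)
  qed
  then show "lst_invariant y (lst_step (word_lt y) s)"
    "lst_potential s < lst_potential (lst_step (word_lt y) s)" by simp_all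
qed

lemma lst_invariant_init:
  assumes "y \<noteq> []"
  shows "lst_invariant y lst_init"
proof -
  have "has_period y 0 1 1" by (simp add: has_period_def)
  then have "lyndon_power_prefix y 0 1 1" by unfold_locales (auto simp: lyndon_factor_single)
  moreover have "no_lyndon_across y 0" by (simp add: no_lyndon_across_def)
  moreover have "lyndon_suffix_len y 0 = 1"
    using lyndon_suffix_len_start[of y 0 0] lyndon_factor_single[of y 0] assms
    by (simp add: no_lyndon_across_def)
  ultimately show ?thesis using assms by (simp add: lst_invariant_def lst_init_def Suc_le_eq)
qed

lemma lst_iter_Suc: "lst_iter y (Suc k) = lst_step (word_lt y) (lst_iter y k)"
  by (simp add: lst_iter_def)

lemma lst_iter_invariant:
  assumes "y \<noteq> []" "\<forall>k'<k. lst_j (lst_iter y k') < length y"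
  shows "lst_invariant y (lst_iter y k) \<and> k < lst_potential (lst_iter y k)"
  using assms(2)
proof (induction k)
  case 0
  then show ?case using lst_invariant_init[OF assms(1)]
    by (simp add: lst_iter_def lst_init_def lst_potential_def)
next
  case (Suc k)
  then show ?case
    using lst_step_invariant[of y "lst_iter y k"] lst_iter_Suc[of y k] by fastforce
qed

lemma lst_potential_le:
  assumes "lst_invariant y s"
  shows "lst_potential s \<le> 2 * length y"
proof -
  obtain lyns p h i j where s: "s = (lyns, p, h, i, j)" by (cases s) auto
  then have "lyndon_power_prefix y h p j" "j \<le> length y"
    using assms by (simp_all add: lst_invariant_def)
  then have "h \<le> j" using lyndon_power_prefix.full_period lyndon_power_prefix.period_pos
    by fastforce
  then show ?thesis using s \<open>j \<le> length y\<close> by (simp add: lst_potential_def)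
qed

lemma lst_halts:
  assumes "y \<noteq> []"
  shows "\<exists>k \<le> 2 * length y. \<not> lst_j (lst_iter y k) < length y"
proof (rule ccontr)
  assume "\<not> ?thesis"
  then have "lst_invariant y (lst_iter y (2 * length y)) \<and>
      2 * length y < lst_potential (lst_iter y (2 * length y))"
    using lst_iter_invariant[OF assms] by simp
  then show False using lst_potential_le by (metis not_le)
qed

lemma lst_steps_le:
  assumes "y \<noteq> []"
  shows "lst_steps y \<le> 2 * length y"
  using lst_halts[OF assms] unfolding lst_steps_def by (meson Least_le order_trans)

lemma lst_steps_halts:
  assumes "y \<noteq> []"
  shows "\<not> lst_j (lst_iter y (lst_steps y)) < length y"
proof -
  obtain k where "\<not> lst_j (lst_iter y k) < length y" using lst_halts[OF assms] by blast
  then show ?thesis unfolding lst_steps_def by (rule LeastI)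
qed

lemma lst_running_before_steps:
  "k < lst_steps y \<Longrightarrow> lst_j (lst_iter y k) < length y"
  unfolding lst_steps_def using not_less_Least by blast

lemma lst_invariant_steps:
  assumes "y \<noteq> []" "k \<le> lst_steps y"
  shows "lst_invariant y (lst_iter y k)"
proof -
  have "\<forall>k'<k. lst_j (lst_iter y k') < length y"
    using lst_running_before_steps[of _ y] assms(2) by simp
  then show ?thesis using lst_iter_invariant[OF assms(1)] by simp
qed

lemma lyndon_suffix_table_correct:
  assumes "y \<noteq> []" "k < length y"
  shows "lyndon_suffix_table y k = longest_lyndon_suffix_len (take (k + 1) y)"
proof -
  obtain lyns p h i j where s: "lst_iter y (lst_steps y) = (lyns, p, h, i, j)"
    by (cases "lst_iter y (lst_steps y)") auto
  then have "j = length y" "\<forall>k<j. lyns k = lyndon_suffix_len y k"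
    using lst_invariant_steps[OF assms(1) order_refl] lst_steps_halts[OF assms(1)]
    by (auto simp: lst_invariant_def lst_j_def)
  then show ?thesis
    using s assms(2) longest_lyndon_suffix_len_take[OF assms(2)]
    by (simp add: lyndon_suffix_table_def lst_lyns_def)
qed

lemma lst_step_cong:
  assumes "lst_invariant y s" "lst_j s < length y"
    and "\<forall>a < length y. \<forall>b < length y. (y!a < y!b) = (z!a < z!b)"
  shows "lst_step (word_lt z) s = lst_step (word_lt y) s"
proof -
  obtain lyns p h i j where s: "s = (lyns, p, h, i, j)" by (cases s) auto
  then interpret lyndon_power_prefix y h p j using assms(1) by (simp add: lst_invariant_def)
  have "i < j" using s assms(1) restart_position(2) mod_less_divisor[OF period_pos, of "j - h"]
    by (simp add: lst_invariant_def)
  moreover have "j < length y" using s assms(2) by (simp add: lst_j_def)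
  ultimately have "word_lt z j i = word_lt y j i" "word_lt z i j = word_lt y i j"
    using assms(3) by (simp_all add: word_lt_def)
  then show ?thesis unfolding s lst_step_def by simp
qed

lemma lst_iter_cong:
  assumes "y \<noteq> []" "\<forall>a < length y. \<forall>b < length y. (y!a < y!b) = (z!a < z!b)"
  shows "k \<le> lst_steps y \<Longrightarrow> lst_iter z k = lst_iter y k"
proof (induction k)
  case 0
  then show ?case by (simp add: lst_iter_def)
next
  case (Suc k)
  then show ?case
    using lst_step_cong[OF lst_invariant_steps[OF assms(1)] lst_running_before_steps assms(2)]
    by (simp add: lst_iter_Suc)
qed

lemma lst_steps_cong:
  assumes "y \<noteq> []" "length z = length y"
    and "\<forall>a < length y. \<forall>b < length y. (y!a < y!b) = (z!a < z!b)"
  shows "lst_steps z = lst_steps y"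
  unfolding lst_steps_def[of z]
proof (rule Least_equality)
  show "\<not> lst_j (lst_iter z (lst_steps y)) < length z"
    using lst_iter_cong[OF assms(1,3) order_refl] lst_steps_halts[OF assms(1)] assms(2) by simp
  show "lst_steps y \<le> k" if "\<not> lst_j (lst_iter z k) < length z" for k
    using that lst_iter_cong[OF assms(1,3)] lst_running_before_steps[of k y] assms(2)
    by (metis not_le order.strict_implies_order)
qed

theorem proposition5:
  "\<exists>c::nat. \<forall>y :: 'a::linorder list. y \<noteq> [] \<longrightarrow>
     (\<exists>k. \<not> lst_j (lst_iter y k) < length y)
   \<and> (\<forall>j < length y. lyndon_suffix_table y j = longest_lyndon_suffix_len (take (j + 1) y))
   \<and> lst_steps y \<le> c * length y
   \<and> (\<forall>z :: 'a list. length z = length y \<and>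
        (\<forall>a < length y. \<forall>b < length y. (y ! a < y ! b) = (z ! a < z ! b)) \<longrightarrow>
        lst_steps z = lst_steps y \<and> lyndon_suffix_table z = lyndon_suffix_table y)"
proof (rule exI[of _ 2], intro allI impI conjI)
  fix y :: "'a list"
  assume "y \<noteq> []"
  then show "\<exists>k. \<not> lst_j (lst_iter y k) < length y" using lst_steps_halts by blast
next
  fix y :: "'a list" and j
  assume "y \<noteq> []" "j < length y"
  then show "lyndon_suffix_table y j = longest_lyndon_suffix_len (take (j + 1) y)"
    by (rule lyndon_suffix_table_correct)
next
  fix y :: "'a list"
  assume "y \<noteq> []"
  then show "lst_steps y \<le> 2 * length y" by (rule lst_steps_le)
next
  fix y z :: "'a list"
  assume "y \<noteq> []" "length z = length y \<and>
    (\<forall>a < length y. \<forall>b < length y. (y!a < y!b) = (z!a < z!b))"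
  then show "lst_steps z = lst_steps y" using lst_steps_cong by blast
next
  fix y z :: "'a list"
  assume y: "y \<noteq> []" and z: "length z = length y \<and>
    (\<forall>a < length y. \<forall>b < length y. (y!a < y!b) = (z!a < z!b))"
  have "lst_steps z = lst_steps y" using lst_steps_cong y z by blast
  moreover have "lst_iter z (lst_steps y) = lst_iter y (lst_steps y)"
    using lst_iter_cong[OF y _ order_refl] z by blast
  ultimately show "lyndon_suffix_table z = lyndon_suffix_table y"
    by (simp add: lyndon_suffix_table_def)
qed

end
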